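(* Let $\mathbf{M}^2$ be a connected smooth oriented surface and $\alpha:\mathbf{M}^2\to\mathbf{R}^4$ a smooth immersion. Suppose $\nu$ is a unit normal vector field along $\alpha$ such that $II_\nu=\langle d^2\alpha,\nu\rangle=\lambda I$ for a nonzero constant $\lambda$, and that the Gaussian curvature satisfies $K(p)\neq\lambda^2$ for all $p\in\mathbf{M}^2$. Then $\alpha$ is hyperspherical (its image lies in a hypersphere of radius $1/|\lambda|$).
   Context: In a chart $(u,v)$, $E=\langle\alpha_u,\alpha_u\rangle$, $F=\langle\alpha_u,\alpha_v\rangle$, $G=\langle\alpha_v,\alpha_v\rangle$, $I=E\,du^2+2F\,du\,dv+G\,dv^2$. For a unit normal field $\nu$, $II_\nu=e_\nu du^2+2f_\nu du\,dv+g_\nu dv^2$ with $e_\nu=\langle\alpha_{uu},\nu\rangle$, $f_\nu=\langle\alpha_{uv},\nu\rangle$, $g_\nu=\langle\alpha_{vv},\nu\rangle$. For an orthonormal normal frame $\{\nu_1,\nu_2\}$ with coefficients $e_i,f_i,g_i$ of $II_{\nu_i}$, the Gaussian curvature is $K=\frac{e_1g_1-f_1^2+e_2g_2-f_2^2}{EG-F^2}$. An immersion is hyperspherical if its image is contained in a hypersphere (round $3$-sphere) of $\mathbf{R}^4$. *)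

theory Defs
  imports "HOL-Analysis.Analysis"
begin

definition pd :: "(real^2 \<Rightarrow> 'b::real_normed_vector) \<Rightarrow> 2 \<Rightarrow> real^2 \<Rightarrow> 'b" where
  "pd f i x = frechet_derivative f (at x) (axis i 1)"

fun Ck_on :: "nat \<Rightarrow> (real^2) set \<Rightarrow> (real^2 \<Rightarrow> 'b::real_normed_vector) \<Rightarrow> bool" where
  "Ck_on 0 U f = continuous_on U f"
| "Ck_on (Suc k) U f =
     ((\<forall>x\<in>U. f differentiable (at x)) \<and> (\<forall>i. Ck_on k U (pd f i)))"

definition smooth_on :: "(real^2) set \<Rightarrow> (real^2 \<Rightarrow> 'b::real_normed_vector) \<Rightarrow> bool" where
  "smooth_on U f = (\<forall>k. Ck_on k U f)"

definition is_param :: "'m topology \<Rightarrow> (real^2 \<Rightarrow> 'm) \<times> (real^2) set \<Rightarrow> bool" where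
  "is_param M c = (case c of (\<psi>, U) \<Rightarrow>
      open U \<and> openin M (\<psi> ` U) \<and>
      homeomorphic_map (subtopology euclidean U) (subtopology M (\<psi> ` U)) \<psi>)"

definition overlap :: "(real^2 \<Rightarrow> 'm) \<times> (real^2) set \<Rightarrow> (real^2 \<Rightarrow> 'm) \<times> (real^2) set \<Rightarrow> (real^2) set" where
  "overlap c1 c2 = {x \<in> snd c1. fst c1 x \<in> fst c2 ` snd c2}"

definition transition :: "(real^2 \<Rightarrow> 'm) \<times> (real^2) set \<Rightarrow> (real^2 \<Rightarrow> 'm) \<times> (real^2) set \<Rightarrow> real^2 \<Rightarrow> real^2" where
  "transition c1 c2 = inv_into (snd c2) (fst c2) \<circ> fst c1"

definition oriented_smooth_surface :: "'m topology \<Rightarrow> ((real^2 \<Rightarrow> 'm) \<times> (real^2) set) set \<Rightarrow> bool" where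
  "oriented_smooth_surface M A =
     (Hausdorff_space M \<and> second_countable M \<and>
      (\<forall>c\<in>A. is_param M c) \<and>
      (\<Union>c\<in>A. fst c ` snd c) = topspace M \<and>
      (\<forall>c1\<in>A. \<forall>c2\<in>A.
          smooth_on (overlap c1 c2) (transition c1 c2) \<and>
          (\<forall>x\<in>overlap c1 c2. det (matrix (frechet_derivative (transition c1 c2) (at x))) > 0)))"

definition smooth_immersion :: "((real^2 \<Rightarrow> 'm) \<times> (real^2) set) set \<Rightarrow> ('m \<Rightarrow> real^4) \<Rightarrow> bool" where
  "smooth_immersion A \<alpha> =
     (\<forall>(\<psi>, U)\<in>A. smooth_on U (\<alpha> \<circ> \<psi>) \<and>
        (\<forall>x\<in>U. inj (frechet_derivative (\<alpha> \<circ> \<psi>) (at x))))"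

definition unit_normal_field :: "((real^2 \<Rightarrow> 'm) \<times> (real^2) set) set \<Rightarrow> ('m \<Rightarrow> real^4) \<Rightarrow> ('m \<Rightarrow> real^4) \<Rightarrow> bool" where
  "unit_normal_field A \<alpha> \<nu> =
     (\<forall>(\<psi>, U)\<in>A. smooth_on U (\<nu> \<circ> \<psi>) \<and>
        (\<forall>x\<in>U. norm (\<nu> (\<psi> x)) = 1 \<and>
           (\<forall>i. pd (\<alpha> \<circ> \<psi>) i x \<bullet> \<nu> (\<psi> x) = 0)))"

definition fE :: "(real^2 \<Rightarrow> real^4) \<Rightarrow> real^2 \<Rightarrow> real" where
  "fE a x = pd a 1 x \<bullet> pd a 1 x"
definition fF :: "(real^2 \<Rightarrow> real^4) \<Rightarrow> real^2 \<Rightarrow> real" where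
  "fF a x = pd a 1 x \<bullet> pd a 2 x"
definition fG :: "(real^2 \<Rightarrow> real^4) \<Rightarrow> real^2 \<Rightarrow> real" where
  "fG a x = pd a 2 x \<bullet> pd a 2 x"

definition se :: "(real^2 \<Rightarrow> real^4) \<Rightarrow> real^4 \<Rightarrow> real^2 \<Rightarrow> real" where
  "se a n x = pd (pd a 1) 1 x \<bullet> n"
definition sf :: "(real^2 \<Rightarrow> real^4) \<Rightarrow> real^4 \<Rightarrow> real^2 \<Rightarrow> real" where
  "sf a n x = pd (pd a 1) 2 x \<bullet> n"
definition sg :: "(real^2 \<Rightarrow> real^4) \<Rightarrow> real^4 \<Rightarrow> real^2 \<Rightarrow> real" where
  "sg a n x = pd (pd a 2) 2 x \<bullet> n"

definition normal_frame :: "(real^2 \<Rightarrow> real^4) \<Rightarrow> real^2 \<Rightarrow> real^4 \<Rightarrow> real^4 \<Rightarrow> bool" where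
  "normal_frame a x n1 n2 =
     (norm n1 = 1 \<and> norm n2 = 1 \<and> n1 \<bullet> n2 = 0 \<and>
      (\<forall>i. pd a i x \<bullet> n1 = 0 \<and> pd a i x \<bullet> n2 = 0))"

text \<open>Gaussian curvature in a chart, computed from an orthonormal normal frame
  (independent of the frame and of the chart).\<close>
definition gauss_K :: "(real^2 \<Rightarrow> real^4) \<Rightarrow> real^4 \<Rightarrow> real^4 \<Rightarrow> real^2 \<Rightarrow> real" where
  "gauss_K a n1 n2 x =
     (se a n1 x * sg a n1 x - (sf a n1 x)^2 + se a n2 x * sg a n2 x - (sf a n2 x)^2)
     / (fE a x * fG a x - (fF a x)^2)"

end

theory Submission
  imports Defs
begin

text \<open>In a chart write \<open>W\<^sub>j = \<partial>\<^sub>j\<nu> + \<lambda> \<partial>\<^sub>j\<alpha>\<close>. Differentiating \<open>\<langle>\<partial>\<^sub>i\<alpha>, \<nu>\<rangle> = 0\<close> and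
  \<open>|\<nu>| = 1\<close> and using \<open>II\<^sub>\<nu> = \<lambda> I\<close> shows that each \<open>W\<^sub>j\<close> is orthogonal to the tangent
  plane and to \<open>\<nu>\<close>, so \<open>W\<^sub>1 = m\<^sub>1 \<xi>\<close> and \<open>W\<^sub>2 = m\<^sub>2 \<xi>\<close> for a unit normal \<open>\<xi>\<close> completing
  \<open>\<nu>\<close> to a normal frame. Differentiating \<open>\<langle>W\<^sub>j, \<partial>\<^sub>i\<alpha>\<rangle> = 0\<close> once more and using the
  symmetry of second derivatives (a Codazzi equation) gives \<open>m\<^sub>1 f\<^sub>\<xi> = m\<^sub>2 e\<^sub>\<xi>\<close> and
  \<open>m\<^sub>1 g\<^sub>\<xi> = m\<^sub>2 f\<^sub>\<xi>\<close>. If \<open>(m\<^sub>1, m\<^sub>2) \<noteq> 0\<close> then \<open>II\<^sub>\<xi>\<close> is degenerate and \<open>K = \<lambda>\<^sup>2\<close>,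
  which is excluded. Hence \<open>\<nu> + \<lambda> \<alpha>\<close> is locally constant, thus constant on the connected
  surface, and \<open>\<alpha>\<close> lies on the sphere of radius \<open>1/|\<lambda>|\<close> about \<open>(\<nu> + \<lambda> \<alpha>)/\<lambda>\<close>.\<close>

lemma notin_span_if_orthogonal:
  fixes w :: "'a::real_inner"
  assumes "w \<noteq> 0" "\<forall>b\<in>B. orthogonal w b"
  shows "w \<notin> span B"
  using orthogonal_to_span[of w B w] assms by (auto simp: orthogonal_def)

lemma orthogonal_to_codim_one_eq_scaleR:
  fixes B :: "'a::euclidean_space set"
  assumes B: "independent B" "card B = DIM('a) - 1"
    and w: "w \<noteq> 0" "\<forall>b\<in>B. orthogonal w b"
    and z: "\<forall>b\<in>B. orthogonal z b"
  shows "z = (z \<bullet> w / (w \<bullet> w)) *\<^sub>R w"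
proof -
  let ?d = "z - (z \<bullet> w / (w \<bullet> w)) *\<^sub>R w"
  have "w \<notin> span B" using notin_span_if_orthogonal[OF w] .
  then have indep: "independent (insert w B)" using B(1) by (simp add: independent_insertI)
  have "finite B" using B(1) independent_bound by blast
  moreover have "w \<notin> B" using \<open>w \<notin> span B\<close> span_base by blast
  ultimately have "card (insert w B) = DIM('a)"
    using B(2) DIM_positive[where 'a='a] by simp
  then have "span (insert w B) = UNIV"
    using card_ge_dim_independent[of "insert w B" UNIV] indep by auto
  moreover have "orthogonal ?d w"
    using w(1) by (simp add: orthogonal_def inner_diff_left)
  moreover have "orthogonal ?d b" if "b \<in> B" for b
    using w(2) z that by (simp add: orthogonal_def inner_diff_left)
  ultimately have "orthogonal ?d ?d"
    using orthogonal_to_span[of ?d "insert w B" ?d] by blast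
  then show ?thesis by (simp add: orthogonal_def)
qed

lemma gram_det_pos:
  fixes x y :: "'a::real_inner"
  assumes "independent {x, y}" "x \<noteq> y"
  shows "(x \<bullet> y)\<^sup>2 < (x \<bullet> x) * (y \<bullet> y)"
proof -
  have "y \<noteq> 0" using assms(1) dependent_zero by blast
  have "x \<notin> span {y}" using assms by (simp add: independent_insert)
  then have "(y \<bullet> y) *\<^sub>R x - (x \<bullet> y) *\<^sub>R y \<noteq> 0"
    using \<open>y \<noteq> 0\<close> by (metis divideR_right inner_eq_zero_iff span_0 span_breakdown_eq span_mul)
  then have "0 < ((y \<bullet> y) *\<^sub>R x - (x \<bullet> y) *\<^sub>R y) \<bullet> ((y \<bullet> y) *\<^sub>R x - (x \<bullet> y) *\<^sub>R y)"
    by simp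
  also have "\<dots> = (y \<bullet> y) * ((x \<bullet> x) * (y \<bullet> y) - (x \<bullet> y)\<^sup>2)"
    by (simp add: algebra_simps inner_commute power2_eq_square)
  finally have "0 < (x \<bullet> x) * (y \<bullet> y) - (x \<bullet> y)\<^sup>2"
    by (rule zero_less_mult_pos) (simp add: \<open>y \<noteq> 0\<close>)
  then show ?thesis by simp
qed

lemma det2_eq_0_if_kernel_nonzero:
  fixes e f g m1 m2 :: "'a::idom"
  assumes "m1 * f = m2 * e" "m1 * g = m2 * f" "m1 \<noteq> 0 \<or> m2 \<noteq> 0"
  shows "e * g - f\<^sup>2 = 0"
proof -
  have "m1 * (e * g - f\<^sup>2) = e * (m1 * g) - f * (m1 * f)"
    by (simp add: algebra_simps power2_eq_square)
  also have "\<dots> = 0"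
    unfolding assms(1,2) by (simp add: algebra_simps)
  finally have 1: "m1 * (e * g - f\<^sup>2) = 0" .
  have "m2 * (e * g - f\<^sup>2) = (m2 * e) * g - (m2 * f) * f"
    by (simp add: algebra_simps power2_eq_square)
  also have "\<dots> = 0"
    unfolding assms(1,2)[symmetric] by (simp add: algebra_simps)
  finally have "m2 * (e * g - f\<^sup>2) = 0" .
  with 1 show ?thesis using assms(3) by auto
qed

lemma pd_cong_open:
  assumes "open U" "x \<in> U" "\<And>y. y \<in> U \<Longrightarrow> f y = g y"
  shows "pd f i x = pd g i x"
proof -
  have "(f has_derivative D) (at x) \<longleftrightarrow> (g has_derivative D) (at x)" for D
    using has_derivative_transform_within_open[OF _ assms(1,2), of f _ UNIV g]
      has_derivative_transform_within_open[OF _ assms(1,2), of g _ UNIV f] assms(3)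
    by auto
  then show ?thesis unfolding pd_def frechet_derivative_def by simp
qed

lemma pd_const [simp]: "pd (\<lambda>y. c) i x = 0"
  unfolding pd_def by simp

lemma pd_eq_0_if_constant_on_open:
  assumes "open U" "x \<in> U" "\<And>y. y \<in> U \<Longrightarrow> f y = c"
  shows "pd f i x = 0"
  using pd_cong_open[OF assms(1,2), where g = "\<lambda>y. c"] assms(3) by simp

lemma pd_inner:
  fixes f g :: "real^2 \<Rightarrow> 'a::real_inner"
  assumes "f differentiable (at x)" "g differentiable (at x)"
  shows "pd (\<lambda>y. f y \<bullet> g y) i x = pd f i x \<bullet> g x + f x \<bullet> pd g i x"
proof -
  have "((\<lambda>y. f y \<bullet> g y) has_derivative
     (\<lambda>h. f x \<bullet> frechet_derivative g (at x) h + frechet_derivative f (at x) h \<bullet> g x)) (at x)"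
    using assms by (intro has_derivative_inner) (simp_all add: frechet_derivative_works[symmetric])
  from frechet_derivative_at[OF this, symmetric] show ?thesis
    unfolding pd_def by (simp add: add.commute)
qed

lemma pd_add_scaleR:
  fixes f g :: "real^2 \<Rightarrow> 'a::real_normed_vector"
  assumes "f differentiable (at x)" "g differentiable (at x)"
  shows "pd (\<lambda>y. f y + c *\<^sub>R g y) i x = pd f i x + c *\<^sub>R pd g i x"
proof -
  have "((\<lambda>y. f y + c *\<^sub>R g y) has_derivative
     (\<lambda>h. frechet_derivative f (at x) h + c *\<^sub>R frechet_derivative g (at x) h)) (at x)"
    using assms by (intro has_derivative_add has_derivative_scaleR_right)
      (simp_all add: frechet_derivative_works[symmetric])
  from frechet_derivative_at[OF this, symmetric] show ?thesis
    unfolding pd_def by simp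
qed

lemma frechet_derivative_eq_0_if_pd_eq_0:
  fixes f :: "real^2 \<Rightarrow> 'a::real_normed_vector"
  assumes "f differentiable (at x)" "\<And>i. pd f i x = 0"
  shows "frechet_derivative f (at x) = (\<lambda>h. 0)"
proof
  fix h :: "real^2"
  have lin: "linear (frechet_derivative f (at x))"
    using assms(1) by (rule linear_frechet_derivative)
  have "frechet_derivative f (at x) h = (\<Sum>i\<in>UNIV. h $ i *\<^sub>R pd f i x)"
    using linear_sum[OF lin] linear_scale[OF lin] basis_expansion[of h]
    unfolding pd_def scalar_mult_eq_scaleR by (metis (no_types, lifting) sum.cong)
  then show "frechet_derivative f (at x) h = 0"
    using assms(2) by simp
qed

lemma pd_eq_0_imp_constant_on_convex:
  fixes f :: "real^2 \<Rightarrow> 'a::real_normed_vector"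
  assumes "convex S" "\<And>z. z \<in> S \<Longrightarrow> f differentiable (at z)"
    and "\<And>z i. z \<in> S \<Longrightarrow> pd f i z = 0"
  shows "\<exists>c. \<forall>z\<in>S. f z = c"
proof (rule has_derivative_zero_constant[OF assms(1)])
  fix z assume "z \<in> S"
  then have "frechet_derivative f (at z) = (\<lambda>h. 0)"
    using assms(2,3) by (intro frechet_derivative_eq_0_if_pd_eq_0)
  then have "(f has_derivative (\<lambda>h. 0)) (at z)"
    using assms(2) \<open>z \<in> S\<close> frechet_derivative_works by metis
  then show "(f has_derivative (\<lambda>h. 0)) (at z within S)"
    by (rule has_derivative_at_withinI)
qed

lemma independent_pd_if_inj:
  fixes f :: "real^2 \<Rightarrow> 'a::real_normed_vector"
  assumes "f differentiable (at x)" "inj (frechet_derivative f (at x))"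
  shows "independent {pd f 1 x, pd f 2 x}" "pd f 1 x \<noteq> pd f 2 x"
proof -
  let ?D = "frechet_derivative f (at x)"
  have lin: "linear ?D" using assms(1) by (rule linear_frechet_derivative)
  have basis: "Basis = {axis 1 1, axis 2 (1::real) :: real^2}"
    by (auto simp: Basis_vec_def UNIV_2)
  have "independent (?D ` Basis)"
    using linear_independent_injective_image[OF lin independent_Basis] assms(2)
    by (auto intro: inj_on_subset)
  moreover have "?D ` Basis = {pd f 1 x, pd f 2 x}"
    unfolding basis pd_def by simp
  ultimately show "independent {pd f 1 x, pd f 2 x}" by simp
  have "axis 1 1 \<noteq> (axis 2 1 :: real^2)"
    by (simp add: axis_eq_axis)
  then show "pd f 1 x \<noteq> pd f 2 x"
    using injD[OF assms(2)] unfolding pd_def by metis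
qed

lemma smooth_on_imp_differentiable: "smooth_on U f \<Longrightarrow> x \<in> U \<Longrightarrow> f differentiable (at x)"
  unfolding smooth_on_def by (metis Ck_on.simps(2))

lemma smooth_on_pd: "smooth_on U f \<Longrightarrow> smooth_on U (pd f i)"
  unfolding smooth_on_def by (metis Ck_on.simps(2))

lemma smooth_on_imp_continuous_on: "smooth_on U f \<Longrightarrow> continuous_on U f"
  unfolding smooth_on_def by (metis Ck_on.simps(1))

lemma has_real_derivative_inner_pd_line:
  fixes f :: "real^2 \<Rightarrow> 'a::real_inner"
  assumes "f differentiable (at (b + s *\<^sub>R axis i 1))"
  shows "((\<lambda>\<sigma>. f (b + \<sigma> *\<^sub>R axis i 1) \<bullet> v) has_real_derivative
           pd f i (b + s *\<^sub>R axis i 1) \<bullet> v) (at s)"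
proof -
  let ?D = "frechet_derivative f (at (b + s *\<^sub>R axis i 1))"
  have "((\<lambda>\<sigma>. b + \<sigma> *\<^sub>R axis i 1) has_derivative (\<lambda>h. h *\<^sub>R axis i 1)) (at s)"
    by (auto intro!: derivative_eq_intros)
  then have "((\<lambda>\<sigma>. f (b + \<sigma> *\<^sub>R axis i 1)) has_derivative (\<lambda>h. ?D (h *\<^sub>R axis i 1))) (at s)"
    using assms[unfolded frechet_derivative_works] by (rule has_derivative_compose)
  then have "((\<lambda>\<sigma>. f (b + \<sigma> *\<^sub>R axis i 1) \<bullet> v) has_derivative (\<lambda>h. ?D (h *\<^sub>R axis i 1) \<bullet> v)) (at s)"
    by (rule has_derivative_inner_left)
  moreover have "(\<lambda>h. ?D (h *\<^sub>R axis i 1) \<bullet> v) = (*) (pd f i (b + s *\<^sub>R axis i 1) \<bullet> v)"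
    using linear_frechet_derivative[OF assms] unfolding pd_def by (simp add: linear_scale fun_eq_iff mult.commute)
  ultimately show ?thesis
    by (simp add: has_field_derivative_def)
qed

lemma second_difference_mvt:
  fixes g G H :: "'a::real_vector \<Rightarrow> real"
  assumes "0 < h"
    and dg: "\<And>s t. 0 \<le> s \<Longrightarrow> s \<le> h \<Longrightarrow> 0 \<le> t \<Longrightarrow> t \<le> h \<Longrightarrow>
      ((\<lambda>\<sigma>. g (y + t *\<^sub>R w + \<sigma> *\<^sub>R u)) has_real_derivative G (y + t *\<^sub>R w + s *\<^sub>R u)) (at s)"
    and dG: "\<And>s t. 0 \<le> s \<Longrightarrow> s \<le> h \<Longrightarrow> 0 \<le> t \<Longrightarrow> t \<le> h \<Longrightarrow>
      ((\<lambda>\<tau>. G (y + s *\<^sub>R u + \<tau> *\<^sub>R w)) has_real_derivative H (y + s *\<^sub>R u + t *\<^sub>R w)) (at t)"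
  shows "\<exists>s t. 0 < s \<and> s < h \<and> 0 < t \<and> t < h \<and>
    g (y + h *\<^sub>R u + h *\<^sub>R w) - g (y + h *\<^sub>R u) - g (y + h *\<^sub>R w) + g y
      = h\<^sup>2 * H (y + s *\<^sub>R u + t *\<^sub>R w)"
proof -
  define \<phi> where "\<phi> \<sigma> = g (y + h *\<^sub>R w + \<sigma> *\<^sub>R u) - g (y + 0 *\<^sub>R w + \<sigma> *\<^sub>R u)" for \<sigma>
  have "DERIV \<phi> \<sigma> :> G (y + h *\<^sub>R w + \<sigma> *\<^sub>R u) - G (y + 0 *\<^sub>R w + \<sigma> *\<^sub>R u)"
    if "0 \<le> \<sigma>" "\<sigma> \<le> h" for \<sigma>
    unfolding \<phi>_def using that \<open>0 < h\<close> by (intro DERIV_diff dg) auto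
  from MVT2[OF \<open>0 < h\<close> this] obtain s where s: "0 < s" "s < h"
    and \<phi>: "\<phi> h - \<phi> 0 = (h - 0) * (G (y + h *\<^sub>R w + s *\<^sub>R u) - G (y + 0 *\<^sub>R w + s *\<^sub>R u))"
    by blast
  define \<psi> where "\<psi> \<tau> = G (y + s *\<^sub>R u + \<tau> *\<^sub>R w)" for \<tau>
  have "DERIV \<psi> \<tau> :> H (y + s *\<^sub>R u + \<tau> *\<^sub>R w)" if "0 \<le> \<tau>" "\<tau> \<le> h" for \<tau>
    unfolding \<psi>_def using that s by (intro dG) auto
  from MVT2[OF \<open>0 < h\<close> this] obtain t where t: "0 < t" "t < h"
    and \<psi>: "\<psi> h - \<psi> 0 = (h - 0) * H (y + s *\<^sub>R u + t *\<^sub>R w)"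
    by blast
  have "\<phi> h - \<phi> 0 = h * (\<psi> h - \<psi> 0)"
    using \<phi> unfolding \<psi>_def by (simp add: add_ac)
  also have "\<phi> h - \<phi> 0 = g (y + h *\<^sub>R u + h *\<^sub>R w) - g (y + h *\<^sub>R u) - g (y + h *\<^sub>R w) + g y"
    unfolding \<phi>_def by (simp add: add_ac)
  finally show ?thesis
    using s t \<psi> by (intro exI[of _ s] exI[of _ t]) (simp add: power2_eq_square)
qed

lemma second_difference_quotient_tendsto:
  fixes \<Delta> :: "real \<Rightarrow> real" and H :: "'a::real_normed_vector \<Rightarrow> real"
  assumes "isCont H y" "0 < r"
    and \<Delta>: "\<And>h. 0 < h \<Longrightarrow> h < r \<Longrightarrow> \<exists>p. norm (p - y) \<le> C * h \<and> \<Delta> h = h\<^sup>2 * H p"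
  shows "((\<lambda>h. \<Delta> h / h\<^sup>2) \<longlongrightarrow> H y) (at_right 0)"
proof -
  obtain p where p: "\<And>h. 0 < h \<Longrightarrow> h < r \<Longrightarrow> norm (p h - y) \<le> C * h \<and> \<Delta> h = h\<^sup>2 * H (p h)"
    using \<Delta> by metis
  have near: "\<forall>\<^sub>F h in at_right 0. 0 < h \<and> h < r"
    using \<open>0 < r\<close> by (simp add: eventually_at_right_field) blast
  have "((\<lambda>h. p h - y) \<longlongrightarrow> 0) (at_right 0)"
  proof (rule Lim_null_comparison)
    show "\<forall>\<^sub>F h in at_right 0. norm (p h - y) \<le> C * h"
      using near by eventually_elim (use p in blast)
    show "((*) C \<longlongrightarrow> 0) (at_right (0::real))"
      by (auto intro!: tendsto_eq_intros)
  qed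
  then have "((\<lambda>h. H (p h)) \<longlongrightarrow> H y) (at_right 0)"
    using isCont_tendsto_compose[OF assms(1)] by (simp add: LIM_zero_iff)
  moreover have "\<forall>\<^sub>F h in at_right 0. H (p h) = \<Delta> h / h\<^sup>2"
    using near by eventually_elim (use p in auto)
  ultimately show ?thesis by (rule tendsto_cong[THEN iffD1, rotated])
qed

lemma second_difference_tendsto_pd_pd:
  fixes f :: "real^2 \<Rightarrow> 'a::real_inner"
  assumes "open U" "y \<in> U"
    and df: "\<And>z. z \<in> U \<Longrightarrow> f differentiable (at z)"
    and dpd: "\<And>z. z \<in> U \<Longrightarrow> pd f i differentiable (at z)"
    and cont: "isCont (pd (pd f i) j) y"
  shows "((\<lambda>h. (f (y + h *\<^sub>R axis i 1 + h *\<^sub>R axis j 1) - f (y + h *\<^sub>R axis i 1)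
                 - f (y + h *\<^sub>R axis j 1) + f y) \<bullet> v / h\<^sup>2)
          \<longlongrightarrow> pd (pd f i) j y \<bullet> v) (at_right 0)"
proof -
  let ?u = "axis i 1 :: real^2" and ?w = "axis j 1 :: real^2"
  obtain r where "0 < r" "ball y r \<subseteq> U"
    using assms(1,2) open_contains_ball by blast
  have in_U: "y + s *\<^sub>R ?u + t *\<^sub>R ?w \<in> U" if "\<bar>s\<bar> + \<bar>t\<bar> < r" for s t
  proof -
    have "norm (s *\<^sub>R ?u + t *\<^sub>R ?w) \<le> \<bar>s\<bar> + \<bar>t\<bar>"
      using norm_triangle_ineq[of "s *\<^sub>R ?u" "t *\<^sub>R ?w"] by simp
    moreover have "dist y (y + (s *\<^sub>R ?u + t *\<^sub>R ?w)) = norm (s *\<^sub>R ?u + t *\<^sub>R ?w)"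
      by (metis dist_add_cancel add.right_neutral dist_0_norm)
    ultimately have "y + (s *\<^sub>R ?u + t *\<^sub>R ?w) \<in> ball y r"
      using that by simp
    then show ?thesis
      using \<open>ball y r \<subseteq> U\<close> by (auto simp: add.assoc)
  qed
  show ?thesis
  proof (rule second_difference_quotient_tendsto[where C = 2 and r = "r / 2" and H = "\<lambda>z. pd (pd f i) j z \<bullet> v"])
    show "isCont (\<lambda>z. pd (pd f i) j z \<bullet> v) y"
      using cont by (intro continuous_intros)
    show "0 < r / 2" using \<open>0 < r\<close> by simp
    fix h :: real assume h: "0 < h" "h < r / 2"
    have "\<exists>s t. 0 < s \<and> s < h \<and> 0 < t \<and> t < h \<and>
      f (y + h *\<^sub>R ?u + h *\<^sub>R ?w) \<bullet> v - f (y + h *\<^sub>R ?u) \<bullet> v - f (y + h *\<^sub>R ?w) \<bullet> v + f y \<bullet> v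
        = h\<^sup>2 * (pd (pd f i) j (y + s *\<^sub>R ?u + t *\<^sub>R ?w) \<bullet> v)"
    proof (rule second_difference_mvt[OF h(1)])
      fix s t assume st: "0 \<le> s" "s \<le> h" "0 \<le> t" "t \<le> h"
      then have U: "y + s *\<^sub>R ?u + t *\<^sub>R ?w \<in> U" using h by (intro in_U) auto
      then show "((\<lambda>\<tau>. pd f i (y + s *\<^sub>R ?u + \<tau> *\<^sub>R ?w) \<bullet> v) has_real_derivative
          pd (pd f i) j (y + s *\<^sub>R ?u + t *\<^sub>R ?w) \<bullet> v) (at t)"
        by (intro has_real_derivative_inner_pd_line dpd)
      from U have "y + t *\<^sub>R ?w + s *\<^sub>R ?u \<in> U"
        by (simp add: add_ac)
      then show "((\<lambda>\<sigma>. f (y + t *\<^sub>R ?w + \<sigma> *\<^sub>R ?u) \<bullet> v) has_real_derivative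
          pd f i (y + t *\<^sub>R ?w + s *\<^sub>R ?u) \<bullet> v) (at s)"
        by (intro has_real_derivative_inner_pd_line df)
    qed
    then obtain s t where st: "0 < s" "s < h" "0 < t" "t < h"
      and eq: "f (y + h *\<^sub>R ?u + h *\<^sub>R ?w) \<bullet> v - f (y + h *\<^sub>R ?u) \<bullet> v - f (y + h *\<^sub>R ?w) \<bullet> v + f y \<bullet> v
        = h\<^sup>2 * (pd (pd f i) j (y + s *\<^sub>R ?u + t *\<^sub>R ?w) \<bullet> v)"
      by blast
    have "norm (y + s *\<^sub>R ?u + t *\<^sub>R ?w - y) \<le> 2 * h"
      using norm_triangle_ineq[of "s *\<^sub>R ?u" "t *\<^sub>R ?w"] st by simp
    with eq show "\<exists>p. norm (p - y) \<le> 2 * h \<and>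
        (f (y + h *\<^sub>R ?u + h *\<^sub>R ?w) - f (y + h *\<^sub>R ?u) - f (y + h *\<^sub>R ?w) + f y) \<bullet> v
          = h\<^sup>2 * (pd (pd f i) j p \<bullet> v)"
      by (intro exI[of _ "y + s *\<^sub>R ?u + t *\<^sub>R ?w"]) (simp add: inner_diff_left inner_add_left)
  qed
qed

lemma pd_pd_commute:
  fixes f :: "real^2 \<Rightarrow> 'a::real_inner"
  assumes "open U" "y \<in> U"
    and "\<And>z. z \<in> U \<Longrightarrow> f differentiable (at z)"
    and "\<And>z k. z \<in> U \<Longrightarrow> pd f k differentiable (at z)"
    and "\<And>k l. isCont (pd (pd f k) l) y"
  shows "pd (pd f i) j y = pd (pd f j) i y"
proof -
  txt \<open>Both mixed partials are limits of the same, symmetric, second difference quotient.\<close>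
  have "pd (pd f i) j y \<bullet> v = pd (pd f j) i y \<bullet> v" for v
  proof (rule tendsto_unique[OF trivial_limit_at_right_real])
    note lim = second_difference_tendsto_pd_pd[OF assms, where v = v]
    show "((\<lambda>h. (f (y + h *\<^sub>R axis i 1 + h *\<^sub>R axis j 1) - f (y + h *\<^sub>R axis i 1)
                 - f (y + h *\<^sub>R axis j 1) + f y) \<bullet> v / h\<^sup>2) \<longlongrightarrow> pd (pd f i) j y \<bullet> v) (at_right 0)"
      by (rule lim)
    have "(\<lambda>h. (f (y + h *\<^sub>R axis j 1 + h *\<^sub>R axis i 1) - f (y + h *\<^sub>R axis j 1)
                 - f (y + h *\<^sub>R axis i 1) + f y) \<bullet> v / h\<^sup>2)
        = (\<lambda>h. (f (y + h *\<^sub>R axis i 1 + h *\<^sub>R axis j 1) - f (y + h *\<^sub>R axis i 1)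
                 - f (y + h *\<^sub>R axis j 1) + f y) \<bullet> v / h\<^sup>2)"
      by (simp add: algebra_simps)
    with lim[of j i] show "((\<lambda>h. (f (y + h *\<^sub>R axis i 1 + h *\<^sub>R axis j 1) - f (y + h *\<^sub>R axis i 1)
                 - f (y + h *\<^sub>R axis j 1) + f y) \<bullet> v / h\<^sup>2) \<longlongrightarrow> pd (pd f j) i y \<bullet> v) (at_right 0)"
      by simp
  qed
  then show ?thesis
    using vector_eq_rdot by blast
qed

lemma smooth_on_pd_pd_commute:
  fixes f :: "real^2 \<Rightarrow> 'a::real_inner"
  assumes "open U" "smooth_on U f" "y \<in> U"
  shows "pd (pd f i) j y = pd (pd f j) i y"
proof (rule pd_pd_commute[OF assms(1,3)])
  show "isCont (pd (pd f k) l) y" for k l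
    using smooth_on_imp_continuous_on[OF smooth_on_pd[OF smooth_on_pd[OF assms(2)]]] assms(1,3)
    by (simp add: continuous_on_eq_continuous_at)
qed (use assms(2) smooth_on_imp_differentiable smooth_on_pd in blast)+

lemma normal_frame_complement:
  fixes a :: "real^2 \<Rightarrow> real^4"
  assumes "a differentiable (at x)" "inj (frechet_derivative a (at x))"
    and frame: "normal_frame a x n \<xi>"
    and z: "\<And>i. pd a i x \<bullet> z = 0" "n \<bullet> z = 0"
  shows "z = (z \<bullet> \<xi>) *\<^sub>R \<xi>"
proof -
  let ?B = "{n, pd a 1 x, pd a 2 x}"
  have n: "norm n = 1" "\<And>i. pd a i x \<bullet> n = 0" and \<xi>: "norm \<xi> = 1" "n \<bullet> \<xi> = 0" "\<And>i. pd a i x \<bullet> \<xi> = 0"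
    using frame unfolding normal_frame_def by auto
  have tangent: "independent {pd a 1 x, pd a 2 x}" "pd a 1 x \<noteq> pd a 2 x"
    using independent_pd_if_inj[OF assms(1,2)] by auto
  have "n \<notin> span {pd a 1 x, pd a 2 x}"
    using n by (intro notin_span_if_orthogonal) (auto simp: orthogonal_def inner_commute)
  then have "independent ?B"
    using tangent(1) by (rule independent_insertI)
  moreover have "n \<notin> {pd a 1 x, pd a 2 x}"
    using \<open>n \<notin> span _\<close> span_base by blast
  then have "card ?B = DIM(real^4) - 1"
    using tangent(2) by simp
  moreover have "\<forall>b\<in>?B. orthogonal \<xi> b" "\<forall>b\<in>?B. orthogonal z b"
    using \<xi> z by (auto simp: orthogonal_def inner_commute)
  moreover have "\<xi> \<noteq> 0" "\<xi> \<bullet> \<xi> = 1"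
    using \<xi>(1) by (auto simp: norm_eq_1)
  ultimately show ?thesis
    using orthogonal_to_codim_one_eq_scaleR[of ?B \<xi> z] by simp
qed

text \<open>Inside a chart, \<open>pd \<nu> j x + lam *\<^sub>R pd a j x\<close> is the \<open>j\<close>-th partial derivative of
  \<open>\<nu> + lam *\<^sub>R a\<close>, which is \<open>lam\<close> times the center of the sphere to be found.\<close>

locale umbilic_chart =
  fixes U :: "(real^2) set" and a \<nu> :: "real^2 \<Rightarrow> real^4" and lam :: real
  assumes open_U: "open U"
    and smooth_a: "smooth_on U a" and smooth_\<nu>: "smooth_on U \<nu>"
    and norm_\<nu>: "\<And>x. x \<in> U \<Longrightarrow> norm (\<nu> x) = 1"
    and normal_\<nu>: "\<And>x i. x \<in> U \<Longrightarrow> pd a i x \<bullet> \<nu> x = 0"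
    and umbilic: "\<And>x. x \<in> U \<Longrightarrow>
      se a (\<nu> x) x = lam * fE a x \<and> sf a (\<nu> x) x = lam * fF a x \<and> sg a (\<nu> x) x = lam * fG a x"
begin

lemma differentiable_at_U:
  assumes "x \<in> U"
  shows "a differentiable (at x)" "\<nu> differentiable (at x)"
    "pd a i differentiable (at x)" "pd \<nu> i differentiable (at x)"
  using assms smooth_a smooth_\<nu> by (auto intro: smooth_on_imp_differentiable smooth_on_pd)

lemma umbilic_second_derivative:
  assumes "x \<in> U"
  shows "pd (pd a i) j x \<bullet> \<nu> x = lam * (pd a i x \<bullet> pd a j x)"
proof -
  have "pd (pd a 1) 1 x \<bullet> \<nu> x = lam * (pd a 1 x \<bullet> pd a 1 x)"
    "pd (pd a 1) 2 x \<bullet> \<nu> x = lam * (pd a 1 x \<bullet> pd a 2 x)"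
    "pd (pd a 2) 2 x \<bullet> \<nu> x = lam * (pd a 2 x \<bullet> pd a 2 x)"
    using umbilic[OF assms] unfolding se_def sf_def sg_def fE_def fF_def fG_def by auto
  then show ?thesis
    using exhaust_2[of i] exhaust_2[of j] smooth_on_pd_pd_commute[OF open_U smooth_a assms, of 2 1]
    by (auto simp: inner_commute)
qed

lemma pd_center_orthogonal:
  assumes "x \<in> U"
  shows "(pd \<nu> j x + lam *\<^sub>R pd a j x) \<bullet> pd a i x = 0"
    and "(pd \<nu> j x + lam *\<^sub>R pd a j x) \<bullet> \<nu> x = 0"
proof -
  have "pd (\<lambda>z. pd a i z \<bullet> \<nu> z) j x = 0"
    using normal_\<nu> by (intro pd_eq_0_if_constant_on_open[OF open_U assms])
  then have "pd (pd a i) j x \<bullet> \<nu> x + pd a i x \<bullet> pd \<nu> j x = 0"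
    using pd_inner[OF differentiable_at_U(3,2)[OF assms]] by simp
  then show "(pd \<nu> j x + lam *\<^sub>R pd a j x) \<bullet> pd a i x = 0"
    using umbilic_second_derivative[OF assms, of i j] by (simp add: inner_add_left inner_commute[of "pd a i x"])
  have "pd (\<lambda>z. \<nu> z \<bullet> \<nu> z) j x = 0"
    using norm_\<nu> by (intro pd_eq_0_if_constant_on_open[OF open_U assms, where c = 1]) (simp add: norm_eq_1)
  then have "pd \<nu> j x \<bullet> \<nu> x = 0"
    using pd_inner[OF differentiable_at_U(2,2)[OF assms]] by (simp add: inner_commute)
  then show "(pd \<nu> j x + lam *\<^sub>R pd a j x) \<bullet> \<nu> x = 0"
    using normal_\<nu>[OF assms] by (simp add: inner_add_left)
qed

lemma pd_center_codazzi:
  assumes "x \<in> U"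
  shows "(pd \<nu> j x + lam *\<^sub>R pd a j x) \<bullet> pd (pd a i) k x
       = (pd \<nu> k x + lam *\<^sub>R pd a k x) \<bullet> pd (pd a i) j x"
proof -
  have product_rule: "(pd (pd \<nu> j) k x + lam *\<^sub>R pd (pd a j) k x) \<bullet> pd a i x
      + (pd \<nu> j x + lam *\<^sub>R pd a j x) \<bullet> pd (pd a i) k x = 0" for j k
  proof -
    have "pd (\<lambda>z. (pd \<nu> j z + lam *\<^sub>R pd a j z) \<bullet> pd a i z) k x = 0"
      using pd_center_orthogonal(1) by (intro pd_eq_0_if_constant_on_open[OF open_U assms])
    then show ?thesis
      using assms by (simp add: pd_inner pd_add_scaleR differentiable_at_U)
  qed
  have "pd (pd \<nu> j) k x = pd (pd \<nu> k) j x" "pd (pd a j) k x = pd (pd a k) j x"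
    using smooth_on_pd_pd_commute[OF open_U _ assms] smooth_a smooth_\<nu> by auto
  then show ?thesis
    using product_rule[of j k] product_rule[of k j] by simp
qed

lemma gauss_K_eq_sq_if_degenerate:
  assumes "x \<in> U" "inj (frechet_derivative a (at x))"
    and "se a \<xi> x * sg a \<xi> x - (sf a \<xi> x)\<^sup>2 = 0"
  shows "gauss_K a (\<nu> x) \<xi> x = lam\<^sup>2"
proof -
  have "fE a x * fG a x - (fF a x)\<^sup>2 \<noteq> 0"
    using gram_det_pos[OF independent_pd_if_inj[OF differentiable_at_U(1) assms(2)]] assms(1)
    unfolding fE_def fF_def fG_def by simp
  with umbilic[OF assms(1)] assms(3) show ?thesis
    unfolding gauss_K_def by (simp add: field_simps power2_eq_square)
qed

lemma pd_center_eq_0: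
  assumes x: "x \<in> U" and inj: "inj (frechet_derivative a (at x))"
    and K: "\<And>\<xi>. normal_frame a x (\<nu> x) \<xi> \<Longrightarrow> gauss_K a (\<nu> x) \<xi> x \<noteq> lam\<^sup>2"
  shows "pd \<nu> i x + lam *\<^sub>R pd a i x = 0"
proof -
  let ?W = "\<lambda>j. pd \<nu> j x + lam *\<^sub>R pd a j x"
  have "?W 1 = 0 \<and> ?W 2 = 0"
  proof (rule ccontr)
    assume "\<not> (?W 1 = 0 \<and> ?W 2 = 0)"
    then obtain w where w: "w \<in> {?W 1, ?W 2}" "w \<noteq> 0" by auto
    define \<xi> where "\<xi> = sgn w"
    have frame: "normal_frame a x (\<nu> x) \<xi>"
      using w pd_center_orthogonal[OF x] norm_\<nu>[OF x] normal_\<nu>[OF x]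
      unfolding normal_frame_def \<xi>_def by (auto simp: norm_sgn sgn_div_norm inner_commute)
    define m where "m j = ?W j \<bullet> \<xi>" for j
    have W: "?W j = m j *\<^sub>R \<xi>" for j
      unfolding m_def using pd_center_orthogonal[OF x]
      by (intro normal_frame_complement[OF differentiable_at_U(1)[OF x] inj frame]) (auto simp: inner_commute)
    have "m 1 \<noteq> 0 \<or> m 2 \<noteq> 0"
      using w W[of 1] W[of 2] by auto
    moreover have "m 1 * sf a \<xi> x = m 2 * se a \<xi> x" "m 1 * sg a \<xi> x = m 2 * sf a \<xi> x"
      using pd_center_codazzi[OF x, of 1 1 2] pd_center_codazzi[OF x, of 1 2 2]
        smooth_on_pd_pd_commute[OF open_U smooth_a x, of 2 1]
      unfolding se_def sf_def sg_def W by (simp_all add: inner_commute)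
    ultimately have "se a \<xi> x * sg a \<xi> x - (sf a \<xi> x)\<^sup>2 = 0"
      by (intro det2_eq_0_if_kernel_nonzero[of "m 1" _ "m 2"])
    then show False
      using K[OF frame] gauss_K_eq_sq_if_degenerate[OF x inj] by blast
  qed
  then show ?thesis
    using exhaust_2[of i] by auto
qed

lemma center_locally_constant:
  assumes x: "x \<in> U"
    and inj: "\<And>z. z \<in> U \<Longrightarrow> inj (frechet_derivative a (at z))"
    and K: "\<And>z \<xi>. z \<in> U \<Longrightarrow> normal_frame a z (\<nu> z) \<xi> \<Longrightarrow> gauss_K a (\<nu> z) \<xi> z \<noteq> lam\<^sup>2"
  shows "\<exists>r>0. ball x r \<subseteq> U \<and> (\<forall>z\<in>ball x r. \<nu> z + lam *\<^sub>R a z = \<nu> x + lam *\<^sub>R a x)"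
proof -
  obtain r where r: "0 < r" "ball x r \<subseteq> U"
    using open_U x open_contains_ball by blast
  have "\<exists>c. \<forall>z\<in>ball x r. \<nu> z + lam *\<^sub>R a z = c"
  proof (rule pd_eq_0_imp_constant_on_convex[OF convex_ball])
    fix z assume "z \<in> ball x r"
    then have z: "z \<in> U" using r(2) by blast
    then show "(\<lambda>z. \<nu> z + lam *\<^sub>R a z) differentiable (at z)"
      using differentiable_at_U by simp
    show "pd (\<lambda>z. \<nu> z + lam *\<^sub>R a z) i z = 0" for i
      using pd_center_eq_0[OF z inj[OF z] K[OF z]] differentiable_at_U[OF z]
      by (simp add: pd_add_scaleR)
  qed
  then show ?thesis
    using r x by (metis centre_in_ball)
qed

end

lemma openin_param_image:
  assumes "is_param M (\<psi>, U)" "open V" "V \<subseteq> U"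
  shows "openin M (\<psi> ` V)"
proof -
  have U: "open U" "openin M (\<psi> ` U)"
    and hm: "homeomorphic_map (top_of_set U) (subtopology M (\<psi> ` U)) \<psi>"
    using assms(1) unfolding is_param_def by auto
  have "openin (top_of_set U) V"
    using open_openin_trans[OF U(1) assms(2,3)] .
  then have "openin (subtopology M (\<psi> ` U)) (\<psi> ` V)"
    using homeomorphic_imp_open_map[OF hm] unfolding open_map_def by blast
  then show ?thesis
    using openin_trans_full U(2) by blast
qed

lemma connected_space_locally_constant_imp_constant:
  assumes conn: "connected_space M"
    and loc: "\<And>p. p \<in> topspace M \<Longrightarrow> \<exists>T. openin M T \<and> p \<in> T \<and> (\<forall>q\<in>T. f q = f p)"
  shows "\<exists>c. \<forall>p\<in>topspace M. f p = c"
proof (cases "topspace M = {}")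
  case False
  then obtain p0 where p0: "p0 \<in> topspace M" by blast
  have "openin M {p \<in> topspace M. P (f p)}" for P
  proof (rule openin_subopen[THEN iffD2], safe)
    fix p assume "p \<in> topspace M" "P (f p)"
    then obtain T where T: "openin M T" "p \<in> T" "\<forall>q\<in>T. f q = f p"
      using loc by blast
    moreover have "T \<subseteq> {p \<in> topspace M. P (f p)}"
    proof
      fix q assume "q \<in> T"
      then have "f q = f p" using T(3) by blast
      then show "q \<in> {p \<in> topspace M. P (f p)}"
        using openin_subset[OF T(1)] \<open>q \<in> T\<close> \<open>P (f p)\<close> by auto
    qed
    ultimately show "\<exists>T. openin M T \<and> p \<in> T \<and> T \<subseteq> {p \<in> topspace M. P (f p)}"
      by blast
  qed
  from connected_spaceD[OF conn this this, of "\<lambda>v. v = f p0" "\<lambda>v. v \<noteq> f p0"] p0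
  have "{p \<in> topspace M. f p \<noteq> f p0} = {}"
    by blast
  then show ?thesis by blast
qed simp

lemma oriented_smooth_surface_covers:
  assumes "oriented_smooth_surface M A" "p \<in> topspace M"
  shows "\<exists>\<psi> U x. (\<psi>, U) \<in> A \<and> x \<in> U \<and> p = \<psi> x"
proof -
  from assms obtain c where "c \<in> A" "p \<in> fst c ` snd c"
    unfolding oriented_smooth_surface_def by blast
  then show ?thesis by (cases c) auto
qed

lemma center_locally_constant_on_surface:
  assumes surf: "oriented_smooth_surface M A"
    and imm: "smooth_immersion A \<alpha>"
    and nu: "unit_normal_field A \<alpha> \<nu>"
    and umb: "\<forall>(\<psi>, U)\<in>A. \<forall>x\<in>U.
               se (\<alpha> \<circ> \<psi>) (\<nu> (\<psi> x)) x = lam * fE (\<alpha> \<circ> \<psi>) x \<and>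
               sf (\<alpha> \<circ> \<psi>) (\<nu> (\<psi> x)) x = lam * fF (\<alpha> \<circ> \<psi>) x \<and>
               sg (\<alpha> \<circ> \<psi>) (\<nu> (\<psi> x)) x = lam * fG (\<alpha> \<circ> \<psi>) x"
    and K: "\<forall>(\<psi>, U)\<in>A. \<forall>x\<in>U. \<forall>n1 n2. normal_frame (\<alpha> \<circ> \<psi>) x n1 n2 \<longrightarrow>
               gauss_K (\<alpha> \<circ> \<psi>) n1 n2 x \<noteq> lam^2"
    and p: "p \<in> topspace M"
  shows "\<exists>T. openin M T \<and> p \<in> T \<and> (\<forall>q\<in>T. \<nu> q + lam *\<^sub>R \<alpha> q = \<nu> p + lam *\<^sub>R \<alpha> p)"
proof -
  obtain \<psi> U x where chart: "(\<psi>, U) \<in> A" "x \<in> U" "p = \<psi> x"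
    using oriented_smooth_surface_covers[OF surf p] by blast
  have param: "is_param M (\<psi>, U)"
    using surf chart(1) unfolding oriented_smooth_surface_def by blast
  interpret umbilic_chart U "\<alpha> \<circ> \<psi>" "\<nu> \<circ> \<psi>" lam
    using param imm nu umb chart(1) unfolding is_param_def smooth_immersion_def unit_normal_field_def
    by unfold_locales auto
  have "inj (frechet_derivative (\<alpha> \<circ> \<psi>) (at z))" if "z \<in> U" for z
    using imm chart(1) that unfolding smooth_immersion_def by blast
  moreover have "gauss_K (\<alpha> \<circ> \<psi>) ((\<nu> \<circ> \<psi>) z) \<xi> z \<noteq> lam\<^sup>2"
    if "z \<in> U" "normal_frame (\<alpha> \<circ> \<psi>) z ((\<nu> \<circ> \<psi>) z) \<xi>" for z \<xi>
    using K chart(1) that by fastforce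
  ultimately obtain r where r: "0 < r" "ball x r \<subseteq> U"
    and const: "\<forall>z\<in>ball x r. (\<nu> \<circ> \<psi>) z + lam *\<^sub>R (\<alpha> \<circ> \<psi>) z = (\<nu> \<circ> \<psi>) x + lam *\<^sub>R (\<alpha> \<circ> \<psi>) x"
    using center_locally_constant[OF chart(2)] by blast
  have "\<forall>q\<in>\<psi> ` ball x r. \<nu> q + lam *\<^sub>R \<alpha> q = \<nu> p + lam *\<^sub>R \<alpha> p"
    using const unfolding chart(3) comp_def by blast
  moreover have "p \<in> \<psi> ` ball x r"
    using chart(3) r(1) by simp
  ultimately show ?thesis
    using openin_param_image[OF param open_ball r(2)] by blast
qed

theorem theorem3p4:
  fixes M :: "'m topology"
    and A :: "((real^2 \<Rightarrow> 'm) \<times> (real^2) set) set"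
    and \<alpha> \<nu> :: "'m \<Rightarrow> real^4"
    and lam :: real
  assumes surf: "oriented_smooth_surface M A"
    and conn: "connected_space M"
    and imm: "smooth_immersion A \<alpha>"
    and nu: "unit_normal_field A \<alpha> \<nu>"
    and lamnz: "lam \<noteq> 0"
    and umb: "\<forall>(\<psi>, U)\<in>A. \<forall>x\<in>U.
               se (\<alpha> \<circ> \<psi>) (\<nu> (\<psi> x)) x = lam * fE (\<alpha> \<circ> \<psi>) x \<and>
               sf (\<alpha> \<circ> \<psi>) (\<nu> (\<psi> x)) x = lam * fF (\<alpha> \<circ> \<psi>) x \<and>
               sg (\<alpha> \<circ> \<psi>) (\<nu> (\<psi> x)) x = lam * fG (\<alpha> \<circ> \<psi>) x"
    and K: "\<forall>(\<psi>, U)\<in>A. \<forall>x\<in>U. \<forall>n1 n2. normal_frame (\<alpha> \<circ> \<psi>) x n1 n2 \<longrightarrow>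
               gauss_K (\<alpha> \<circ> \<psi>) n1 n2 x \<noteq> lam^2"
  shows "\<exists>c :: real^4. \<forall>p\<in>topspace M. dist (\<alpha> p) c = 1 / \<bar>lam\<bar>"
proof -
  obtain c where c: "\<forall>p\<in>topspace M. \<nu> p + lam *\<^sub>R \<alpha> p = c"
    using connected_space_locally_constant_imp_constant[OF conn, where f = "\<lambda>p. \<nu> p + lam *\<^sub>R \<alpha> p"]
      center_locally_constant_on_surface[OF surf imm nu umb K] by blast
  have "dist (\<alpha> p) ((1 / lam) *\<^sub>R c) = 1 / \<bar>lam\<bar>" if p: "p \<in> topspace M" for p
  proof -
    have "norm (\<nu> p) = 1"
      using oriented_smooth_surface_covers[OF surf p] nu unfolding unit_normal_field_def by fastforce
    moreover have "\<alpha> p - (1 / lam) *\<^sub>R c = - ((1 / lam) *\<^sub>R \<nu> p)"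
      using c p lamnz by (auto simp: algebra_simps)
    ultimately show ?thesis
      by (simp add: dist_norm)
  qed
  then show ?thesis by blast
qed

end
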